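(* There is an absolute constant $C$ such that the following holds. Let $A\neq 1$ be a finite group, set $k=k(A)$, let $P\leq S_r$ be a regular permutation group of degree $r$, and let $G=A\wr P$. Then \[ \left|k(G)-\frac{k^r}{r}\right|\leq C\, r\, k^{r/2}. \]
   Context: $k(X)$ denotes the number of conjugacy classes of a finite group $X$. $A\wr P=A^r\rtimes P$ with $P$ permuting the $r$ factors. *)

theory Defs
  imports Complex_Main "HOL-Algebra.Sym_Groups" "HOL-Algebra.Coset"
begin

definition num_conj_classes :: "('a, 'b) monoid_scheme \<Rightarrow> nat" where
  "num_conj_classes X =
     card ((\<lambda>x. {g \<otimes>\<^bsub>X\<^esub> x \<otimes>\<^bsub>X\<^esub> inv\<^bsub>X\<^esub> g | g. g \<in> carrier X}) ` carrier X)"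

definition regular_perm_group :: "nat \<Rightarrow> (nat \<Rightarrow> nat) set \<Rightarrow> bool" where
  "regular_perm_group r P \<longleftrightarrow> subgroup P (sym_group r) \<and>
     (\<forall>i\<in>{1..r}. \<forall>j\<in>{1..r}. \<exists>!\<sigma>. \<sigma> \<in> P \<and> \<sigma> i = j)"

text \<open>Wreath product A wr P = A^r \<rtimes> P, P permuting the r coordinates:
  (f,s)(g,t) = (f \<cdot> (g \<circ> s^-1), s \<circ> t).\<close>
definition wreath :: "('a, 'b) monoid_scheme \<Rightarrow> nat \<Rightarrow> (nat \<Rightarrow> nat) set
                      \<Rightarrow> ((nat \<Rightarrow> 'a) \<times> (nat \<Rightarrow> nat)) monoid" where
  "wreath A r P = \<lparr>
     carrier = {(f, \<sigma>). f \<in> {1..r} \<rightarrow>\<^sub>E carrier A \<and> \<sigma> \<in> P},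
     mult = (\<lambda>(f, \<sigma>) (g, \<tau>). (\<lambda>i\<in>{1..r}. f i \<otimes>\<^bsub>A\<^esub> g (inv' \<sigma> i), \<sigma> \<circ> \<tau>)),
     one = (\<lambda>i\<in>{1..r}. \<one>\<^bsub>A\<^esub>, id) \<rparr>"

end

(*
  Conjugacy classes of G = A wr P are counted coset by coset of the base group N = A^r.
  Two base elements (f, 1) and (f', 1) are conjugate iff the tuples of A-classes of their
  entries lie in one P-orbit, so the classes inside N are the P-orbits on the k^r such
  colourings. By Burnside's lemma r times their number is k^r plus the number of colourings
  fixed by the elements q <> 1; since P is regular such a q has no fixed points, hence at most
  r/2 cycles, and fixes at most k^(r/2) colourings. For sigma <> 1, conjugating by base elements
  moves every entry of (f, sigma) onto a representative of its sigma-cycle and conjugates those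
  entries independently, so at most k^(r/2) classes meet the coset N sigma. Together:
  k^r/r <= k(G) <= k^r/r + r k^(r/2).
*)
theory Submission
  imports Defs "HOL-Combinatorics.Orbits" "HOL-Algebra.Group_Action"
begin

section \<open>Conjugacy classes\<close>

definition conj_class :: "('a, 'b) monoid_scheme \<Rightarrow> 'a \<Rightarrow> 'a set" where
  "conj_class G x = {g \<otimes>\<^bsub>G\<^esub> x \<otimes>\<^bsub>G\<^esub> inv\<^bsub>G\<^esub> g | g. g \<in> carrier G}"

lemma num_conj_classes_eq_card: "num_conj_classes G = card (conj_class G ` carrier G)"
  unfolding num_conj_classes_def conj_class_def by (rule refl)

lemma card_image_le_if_factors:
  assumes "finite (h ` X)" and "\<And>x y. x \<in> X \<Longrightarrow> y \<in> X \<Longrightarrow> h x = h y \<Longrightarrow> f x = f y"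
  shows "card (f ` X) \<le> card (h ` X)"
proof -
  let ?pick = "\<lambda>z. SOME y. y \<in> X \<and> h y = z"
  have "f x = f (?pick (h x))" if "x \<in> X" for x
  proof -
    have "?pick (h x) \<in> X \<and> h (?pick (h x)) = h x"
      by (rule someI[of _ x]) (simp add: that)
    then show ?thesis
      using assms(2)[OF that, of "?pick (h x)"] by simp
  qed
  then have "f ` X = (\<lambda>z. f (?pick z)) ` h ` X"
    unfolding image_image by (rule image_cong[OF refl])
  then show ?thesis
    using card_image_le[OF assms(1)] by simp
qed

context group
begin

lemma conj_class_self: "x \<in> carrier G \<Longrightarrow> x \<in> conj_class G x"
  unfolding conj_class_def by (rule CollectI, rule exI[of _ \<one>]) auto

lemma conj_class_closed: "x \<in> carrier G \<Longrightarrow> conj_class G x \<subseteq> carrier G"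
  unfolding conj_class_def by auto

lemma conj_class_conj:
  "x \<in> carrier G \<Longrightarrow> g \<in> carrier G \<Longrightarrow> g \<otimes> x \<otimes> inv g \<in> conj_class G x"
  unfolding conj_class_def by blast

lemma conj_class_sym:
  assumes x: "x \<in> carrier G" and y: "y \<in> conj_class G x"
  shows "x \<in> conj_class G y"
proof -
  obtain g where g: "g \<in> carrier G" "y = g \<otimes> x \<otimes> inv g"
    using y unfolding conj_class_def by auto
  \<comment> \<open>Reassociate only: the cancellation rules would fire before the factors meet.\<close>
  have "inv g \<otimes> y \<otimes> inv (inv g) = (inv g \<otimes> g) \<otimes> x \<otimes> (inv g \<otimes> g)"
    using g x by (simp add: m_assoc del: l_inv r_inv Units_l_inv Units_r_inv)
  also have "\<dots> = x"
    using g x by simp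
  finally have x_eq: "inv g \<otimes> y \<otimes> inv (inv g) = x" .
  have "y \<in> carrier G"
    using g x by simp
  from conj_class_conj[OF this inv_closed[OF g(1)]] show ?thesis
    unfolding x_eq .
qed

lemma conj_class_subset:
  assumes x: "x \<in> carrier G" and y: "y \<in> conj_class G x"
  shows "conj_class G y \<subseteq> conj_class G x"
proof
  obtain g where g: "g \<in> carrier G" "y = g \<otimes> x \<otimes> inv g"
    using y unfolding conj_class_def by auto
  fix z assume "z \<in> conj_class G y"
  then obtain h where h: "h \<in> carrier G" "z = h \<otimes> y \<otimes> inv h"
    unfolding conj_class_def by auto
  then have "z = (h \<otimes> g) \<otimes> x \<otimes> inv (h \<otimes> g)"
    using g x by (simp add: inv_mult_group m_assoc)
  then show "z \<in> conj_class G x"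
    using g h x conj_class_conj by simp
qed

lemma conj_class_eq:
  assumes x: "x \<in> carrier G" and y: "y \<in> conj_class G x"
  shows "conj_class G y = conj_class G x"
proof -
  have "y \<in> carrier G"
    using x y conj_class_closed by blast
  then show ?thesis
    using conj_class_subset[OF x y] conj_class_subset[OF _ conj_class_sym[OF x y]] by blast
qed

lemma conj_class_eq_iff:
  "x \<in> carrier G \<Longrightarrow> y \<in> carrier G \<Longrightarrow> conj_class G x = conj_class G y \<longleftrightarrow> y \<in> conj_class G x"
  using conj_class_eq conj_class_self by metis

end

section \<open>Cycle representatives of a permutation\<close>

definition cycle_rep :: "('a::linorder \<Rightarrow> 'a) \<Rightarrow> 'a \<Rightarrow> 'a" where
  "cycle_rep \<sigma> i = Min (Orbits.orbit \<sigma> i)"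

definition cycle_reps :: "('a::linorder \<Rightarrow> 'a) \<Rightarrow> 'a set \<Rightarrow> 'a set" where
  "cycle_reps \<sigma> I = {i \<in> I. cycle_rep \<sigma> i = i}"

definition cycle_dist :: "('a::linorder \<Rightarrow> 'a) \<Rightarrow> 'a \<Rightarrow> nat" where
  "cycle_dist \<sigma> i = funpow_dist \<sigma> i (cycle_rep \<sigma> i)"

context
  fixes \<sigma> :: "'a::linorder \<Rightarrow> 'a" and I :: "'a set"
  assumes perm: "\<sigma> permutes I" and fin: "finite I"
begin

private lemma permutation: "permutation \<sigma>"
  using perm fin permutation_permutes by blast

lemma cycle_rep_in_orbit: "cycle_rep \<sigma> i \<in> Orbits.orbit \<sigma> i"
  unfolding cycle_rep_def
  by (intro Min_in finite_orbit permutation_self_in_orbit permutation orbit_nonempty)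

lemma cycle_rep_step: "cycle_rep \<sigma> (\<sigma> i) = cycle_rep \<sigma> i"
  unfolding cycle_rep_def by (simp add: permutation_orbit_step[OF permutation])

lemma cycle_rep_inv: "cycle_rep \<sigma> (inv' \<sigma> i) = cycle_rep \<sigma> i"
  using cycle_rep_step[of "inv' \<sigma> i"] by (simp add: permutes_inverses[OF perm])

lemma cycle_rep_idem: "cycle_rep \<sigma> (cycle_rep \<sigma> i) = cycle_rep \<sigma> i"
  using orbit_cyclic_eq3[OF cyclic_on_orbit'[OF permutation] cycle_rep_in_orbit]
  by (simp add: cycle_rep_def)

lemma cycle_rep_mem: "i \<in> I \<Longrightarrow> cycle_rep \<sigma> i \<in> I"
  using permutes_orbit_subset[OF perm] cycle_rep_in_orbit by blast

lemma cycle_rep_in_reps: "i \<in> I \<Longrightarrow> cycle_rep \<sigma> i \<in> cycle_reps \<sigma> I"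
  unfolding cycle_reps_def using cycle_rep_mem cycle_rep_idem by blast

lemma fixpoint_in_cycle_reps: "i \<in> I \<Longrightarrow> \<sigma> i = i \<Longrightarrow> i \<in> cycle_reps \<sigma> I"
  unfolding cycle_reps_def cycle_rep_def by (simp add: orbit_eq_singleton_iff[THEN iffD2])

lemma invariant_at_cycle_rep:
  assumes "\<And>i. i \<in> I \<Longrightarrow> t (\<sigma> i) = t i" and "i \<in> I"
  shows "t (cycle_rep \<sigma> i) = t i"
proof -
  have "t ((\<sigma> ^^ n) i) = t i" for n
    using assms by (induction n) (auto simp: permutes_in_image[OF permutes_funpow[OF perm]])
  moreover obtain n where "cycle_rep \<sigma> i = (\<sigma> ^^ n) i"
    using cycle_rep_in_orbit[of i] unfolding orbit_altdef by blast
  ultimately show ?thesis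
    by simp
qed

lemma card_cycle_reps_le:
  assumes "\<And>i. i \<in> I \<Longrightarrow> \<sigma> i \<noteq> i"
  shows "2 * card (cycle_reps \<sigma> I) \<le> card I"
proof -
  let ?S = "cycle_reps \<sigma> I"
  have S: "?S \<subseteq> I" "finite ?S"
    unfolding cycle_reps_def using fin by auto
  have "\<sigma> s \<notin> ?S" if "s \<in> ?S" for s
  proof
    assume "\<sigma> s \<in> ?S"
    then have "\<sigma> s = cycle_rep \<sigma> s"
      using cycle_rep_step[of s] unfolding cycle_reps_def by simp
    also have "\<dots> = s"
      using that unfolding cycle_reps_def by blast
    finally show False
      using assms that S(1) by blast
  qed
  then have disjoint: "?S \<inter> \<sigma> ` ?S = {}"
    by blast
  have "2 * card ?S = card ?S + card (\<sigma> ` ?S)"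
    using card_image[OF inj_on_subset[OF permutes_inj[OF perm] subset_UNIV]] by simp
  also have "\<dots> = card (?S \<union> \<sigma> ` ?S)"
    using card_Un_disjoint[OF S(2) finite_imageI[OF S(2)] disjoint] by simp
  also have "\<dots> \<le> card I"
    using S(1) permutes_in_image[OF perm] by (intro card_mono[OF fin]) blast
  finally show ?thesis .
qed

lemma card_invariant_functions_le:
  assumes "finite C"
  shows "card {t \<in> I \<rightarrow>\<^sub>E C. \<forall>i\<in>I. t (\<sigma> i) = t i} \<le> card C ^ card (cycle_reps \<sigma> I)"
    (is "card ?F \<le> _")
proof -
  let ?S = "cycle_reps \<sigma> I"
  have S: "?S \<subseteq> I" "finite ?S"
    unfolding cycle_reps_def using fin by auto
  have "inj_on (\<lambda>t. restrict t ?S) ?F"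
  proof (rule inj_onI)
    fix t u assume t: "t \<in> ?F" and u: "u \<in> ?F" and eq: "restrict t ?S = restrict u ?S"
    have t_inv: "\<And>i. i \<in> I \<Longrightarrow> t (\<sigma> i) = t i" and u_inv: "\<And>i. i \<in> I \<Longrightarrow> u (\<sigma> i) = u i"
      using t u by auto
    have "t i = u i" if i: "i \<in> I" for i
    proof -
      have "t i = t (cycle_rep \<sigma> i)"
        using invariant_at_cycle_rep[of t, OF t_inv i] by simp
      also have "\<dots> = u (cycle_rep \<sigma> i)"
        using fun_cong[OF eq, of "cycle_rep \<sigma> i"] cycle_rep_in_reps[OF i] by (metis restrict_apply')
      also have "\<dots> = u i"
        using invariant_at_cycle_rep[of u, OF u_inv i] .
      finally show ?thesis .
    qed
    then show "t = u"
      using t u by (auto intro: PiE_ext)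
  qed
  moreover have "(\<lambda>t. restrict t ?S) ` ?F \<subseteq> ?S \<rightarrow>\<^sub>E C"
    using S(1) by (auto simp: PiE_iff)
  ultimately have "card ?F \<le> card (?S \<rightarrow>\<^sub>E C)"
    by (rule card_inj_on_le) (simp add: finite_PiE S(2) assms)
  also have "\<dots> = card C ^ card ?S"
    using card_PiE[OF S(2), of "\<lambda>_. C"] by simp
  finally show ?thesis .
qed

lemma cycle_dist_step:
  assumes "i \<notin> cycle_reps \<sigma> I" and "i \<in> I"
  shows "cycle_dist \<sigma> i = Suc (cycle_dist \<sigma> (\<sigma> i))"
proof -
  have "i \<noteq> cycle_rep \<sigma> i"
    using assms unfolding cycle_reps_def by auto
  then show ?thesis
    unfolding cycle_dist_def cycle_rep_step by (rule funpow_dist_step[OF _ cycle_rep_in_orbit])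
qed

end

section \<open>Wreath products\<close>

locale wreath_product = group A for A (structure) +
  fixes r :: nat and P :: "(nat \<Rightarrow> nat) set"
  assumes P_subgroup: "subgroup P (sym_group r)"
begin

abbreviation G where "G \<equiv> wreath A r P"

text \<open>A constant rather than \<open>{1..r}\<close> itself: the simplifier rewrites \<open>{1..r}\<close> to
  \<open>{Suc 0..r}\<close>, after which membership facts about \<open>{1..r}\<close> no longer apply.\<close>

definition I :: "nat set" where "I = {1..r}"

abbreviation base where "base \<equiv> I \<rightarrow>\<^sub>E carrier A"

lemma finite_I: "finite I"
  unfolding I_def by simp

lemma P_permutes: "p \<in> P \<Longrightarrow> p permutes I"
  using subgroup.subset[OF P_subgroup] by (auto simp: sym_group_carrier I_def)

lemma id_in_P: "id \<in> P"
  using subgroup.one_closed[OF P_subgroup] by (simp add: sym_group_one)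

lemma comp_in_P: "p \<in> P \<Longrightarrow> q \<in> P \<Longrightarrow> p \<circ> q \<in> P"
  using subgroup.m_closed[OF P_subgroup] by (simp add: sym_group_mult)

lemma inv_in_P: "p \<in> P \<Longrightarrow> inv' p \<in> P"
  using subgroup.m_inv_closed[OF P_subgroup] subgroup.subset[OF P_subgroup] by force

lemma finite_P: "finite P"
proof -
  have "P \<subseteq> {p. p permutes I}"
    using P_permutes by blast
  then show ?thesis
    using finite_permutations[OF finite_I] finite_subset by blast
qed

lemma P_apply_in: "p \<in> P \<Longrightarrow> i \<in> I \<Longrightarrow> p i \<in> I"
  using permutes_in_image[OF P_permutes] by blast

lemma P_inv_apply_in: "p \<in> P \<Longrightarrow> i \<in> I \<Longrightarrow> inv' p i \<in> I"
  using P_apply_in[OF inv_in_P] .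

lemma P_inverses: "p \<in> P \<Longrightarrow> p (inv' p i) = i" "p \<in> P \<Longrightarrow> inv' p (p i) = i"
  using permutes_inverses[OF P_permutes] by auto

lemma wreath_carrier: "(f, \<sigma>) \<in> carrier G \<longleftrightarrow> f \<in> base \<and> \<sigma> \<in> P"
  unfolding wreath_def I_def by simp

lemma wreath_mult: "(f, \<sigma>) \<otimes>\<^bsub>G\<^esub> (g, \<tau>) = (\<lambda>i\<in>I. f i \<otimes> g (inv' \<sigma> i), \<sigma> \<circ> \<tau>)"
  unfolding wreath_def I_def by simp

lemma wreath_one: "\<one>\<^bsub>G\<^esub> = (\<lambda>i\<in>I. \<one>, id)"
  unfolding wreath_def I_def by simp

lemma wreath_inv_mem: "f \<in> base \<Longrightarrow> \<sigma> \<in> P \<Longrightarrow> (\<lambda>i\<in>I. inv (f (\<sigma> i)), inv' \<sigma>) \<in> carrier G"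
  by (auto simp: wreath_carrier PiE_iff inv_in_P P_apply_in)

lemma wreath_l_inv:
  "f \<in> base \<Longrightarrow> \<sigma> \<in> P \<Longrightarrow> (\<lambda>i\<in>I. inv (f (\<sigma> i)), inv' \<sigma>) \<otimes>\<^bsub>G\<^esub> (f, \<sigma>) = \<one>\<^bsub>G\<^esub>"
  using permutes_inv_inv[OF P_permutes] permutes_inv_o(2)[OF P_permutes]
  by (auto simp: wreath_mult wreath_one PiE_iff P_apply_in intro!: restrict_ext)

lemma wreath_group: "group G"
proof (rule groupI)
  fix x y assume "x \<in> carrier G" "y \<in> carrier G"
  then obtain f \<sigma> g \<tau> where "x = (f, \<sigma>)" "y = (g, \<tau>)" "f \<in> base" "g \<in> base" "\<sigma> \<in> P" "\<tau> \<in> P"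
    by (metis surj_pair wreath_carrier)
  then show "x \<otimes>\<^bsub>G\<^esub> y \<in> carrier G"
    by (auto simp: wreath_carrier wreath_mult PiE_iff comp_in_P P_inv_apply_in)
next
  show "\<one>\<^bsub>G\<^esub> \<in> carrier G"
    by (simp add: wreath_one wreath_carrier id_in_P)
next
  fix x y z assume "x \<in> carrier G" "y \<in> carrier G" "z \<in> carrier G"
  then obtain f \<sigma> g \<tau> h \<rho> where xyz: "x = (f, \<sigma>)" "y = (g, \<tau>)" "z = (h, \<rho>)"
    and mem: "f \<in> base" "g \<in> base" "h \<in> base" "\<sigma> \<in> P" "\<tau> \<in> P" "\<rho> \<in> P"
    by (metis surj_pair wreath_carrier)
  have "inv' (\<sigma> \<circ> \<tau>) = inv' \<tau> \<circ> inv' \<sigma>"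
    using mem by (intro o_inv_distrib permutes_bij[OF P_permutes])
  then show "x \<otimes>\<^bsub>G\<^esub> y \<otimes>\<^bsub>G\<^esub> z = x \<otimes>\<^bsub>G\<^esub> (y \<otimes>\<^bsub>G\<^esub> z)"
    using mem by (auto simp: xyz wreath_mult comp_assoc PiE_iff P_inv_apply_in m_assoc
        intro!: restrict_ext)
next
  fix x assume "x \<in> carrier G"
  then obtain f \<sigma> where x: "x = (f, \<sigma>)" "f \<in> base" "\<sigma> \<in> P"
    by (metis surj_pair wreath_carrier)
  then show "\<one>\<^bsub>G\<^esub> \<otimes>\<^bsub>G\<^esub> x = x"
    by (auto simp: wreath_mult wreath_one PiE_iff extensional_def fun_eq_iff)
next
  fix x assume "x \<in> carrier G"
  then obtain f \<sigma> where x: "x = (f, \<sigma>)" "f \<in> base" "\<sigma> \<in> P"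
    by (metis surj_pair wreath_carrier)
  show "\<exists>y\<in>carrier G. y \<otimes>\<^bsub>G\<^esub> x = \<one>\<^bsub>G\<^esub>"
    using wreath_inv_mem[OF x(2,3)] wreath_l_inv[OF x(2,3)] x(1) by blast
qed

lemma wreath_inv:
  assumes "f \<in> base" "\<sigma> \<in> P"
  shows "inv\<^bsub>G\<^esub> (f, \<sigma>) = (\<lambda>i\<in>I. inv (f (\<sigma> i)), inv' \<sigma>)"
  using group.inv_equality[OF wreath_group wreath_l_inv[OF assms] _ wreath_inv_mem[OF assms]] assms
  by (simp add: wreath_carrier)

lemma wreath_conj:
  assumes "f \<in> base" "g \<in> base" "\<sigma> \<in> P" "\<tau> \<in> P"
  shows "(g, \<tau>) \<otimes>\<^bsub>G\<^esub> (f, \<sigma>) \<otimes>\<^bsub>G\<^esub> inv\<^bsub>G\<^esub> (g, \<tau>)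
    = (\<lambda>i\<in>I. g i \<otimes> f (inv' \<tau> i) \<otimes> inv (g (\<tau> (inv' \<sigma> (inv' \<tau> i)))), \<tau> \<circ> \<sigma> \<circ> inv' \<tau>)"
proof -
  have "inv' (\<tau> \<circ> \<sigma>) = inv' \<sigma> \<circ> inv' \<tau>"
    using assms by (intro o_inv_distrib permutes_bij[OF P_permutes])
  then show ?thesis
    using assms by (auto simp: wreath_inv wreath_mult PiE_iff P_inv_apply_in intro!: restrict_ext)
qed

lemma wreath_conj_by_base:
  assumes "f \<in> base" "g \<in> base" "\<sigma> \<in> P"
  shows "(g, id) \<otimes>\<^bsub>G\<^esub> (f, \<sigma>) \<otimes>\<^bsub>G\<^esub> inv\<^bsub>G\<^esub> (g, id) = (\<lambda>i\<in>I. g i \<otimes> f i \<otimes> inv (g (inv' \<sigma> i)), \<sigma>)"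
  using wreath_conj[OF assms id_in_P] by simp

lemma wreath_conj_of_base:
  assumes "f \<in> base" "g \<in> base" "\<tau> \<in> P"
  shows "(g, \<tau>) \<otimes>\<^bsub>G\<^esub> (f, id) \<otimes>\<^bsub>G\<^esub> inv\<^bsub>G\<^esub> (g, \<tau>) = (\<lambda>i\<in>I. g i \<otimes> f (inv' \<tau> i) \<otimes> inv (g i), id)"
  using wreath_conj[OF assms(1,2) id_in_P assms(3)] assms(3)
  by (simp add: P_inverses permutes_inv_o(1)[OF P_permutes])

end

section \<open>Conjugacy classes in the base group\<close>

lemma (in group) conj_class_of_conj:
  "x \<in> carrier G \<Longrightarrow> g \<in> carrier G \<Longrightarrow> conj_class G (g \<otimes> x \<otimes> inv g) = conj_class G x"
  using conj_class_eq conj_class_conj by blast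

lemma (in group_action) orbit_eq_iff:
  assumes "x \<in> E" "y \<in> E"
  shows "orbit G \<phi> x = orbit G \<phi> y \<longleftrightarrow> y \<in> orbit G \<phi> x"
proof
  show "orbit G \<phi> x = orbit G \<phi> y \<Longrightarrow> y \<in> orbit G \<phi> x"
    using orbit_refl[OF assms(2)] by simp
next
  assume y: "y \<in> orbit G \<phi> x"
  have in_E: "z \<in> E" if "z \<in> orbit G \<phi> w" "w \<in> E" for z w
    using that element_image unfolding orbit_def by blast
  have "z \<in> orbit G \<phi> x" if "z \<in> orbit G \<phi> y" for z
    using orbit_trans[OF assms in_E[OF that assms(2)] y that] .
  moreover have "z \<in> orbit G \<phi> y" if "z \<in> orbit G \<phi> x" for z
    using orbit_trans[OF assms(2,1) in_E[OF that assms(1)] orbit_sym[OF assms y] that] .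
  ultimately show "orbit G \<phi> x = orbit G \<phi> y"
    by blast
qed

context wreath_product
begin

definition colourings :: "(nat \<Rightarrow> 'a set) set" where
  "colourings = I \<rightarrow>\<^sub>E conj_class A ` carrier A"

definition colour :: "(nat \<Rightarrow> 'a) \<Rightarrow> nat \<Rightarrow> 'a set" where
  "colour f = (\<lambda>i\<in>I. conj_class A (f i))"

text \<open>The colour at position \<open>i\<close> moves to \<open>q i\<close>; the inverse makes this a left action.\<close>

definition relabel :: "(nat \<Rightarrow> nat) \<Rightarrow> (nat \<Rightarrow> 'a set) \<Rightarrow> nat \<Rightarrow> 'a set" where
  "relabel q t = (\<lambda>i\<in>I. t (inv' q i))"

abbreviation relabel_action :: "(nat \<Rightarrow> nat) \<Rightarrow> (nat \<Rightarrow> 'a set) \<Rightarrow> nat \<Rightarrow> 'a set" where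
  "relabel_action q \<equiv> restrict (relabel q) colourings"

definition P_group :: "(nat \<Rightarrow> nat) monoid" where
  "P_group = (sym_group r)\<lparr>carrier := P\<rparr>"

abbreviation num_colour_orbits :: nat where
  "num_colour_orbits \<equiv> card (orbits P_group colourings relabel_action)"

lemma colour_image: "colour ` base = colourings"
proof
  show "colour ` base \<subseteq> colourings"
    unfolding colour_def colourings_def by (auto simp: PiE_iff)
next
  show "colourings \<subseteq> colour ` base"
  proof
    fix t assume t: "t \<in> colourings"
    then have "\<forall>i\<in>I. \<exists>x\<in>carrier A. t i = conj_class A x"
      unfolding colourings_def by (auto simp: PiE_iff)
    then obtain f where f: "\<forall>i\<in>I. f i \<in> carrier A \<and> t i = conj_class A (f i)"
      by metis
    then have "colour (restrict f I) = t"
      using t unfolding colour_def colourings_def by (auto simp: PiE_iff extensional_def fun_eq_iff)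
    moreover have "restrict f I \<in> base"
      using f by simp
    ultimately show "t \<in> colour ` base"
      by blast
  qed
qed

lemma relabel_mem: "t \<in> colourings \<Longrightarrow> q \<in> P \<Longrightarrow> relabel q t \<in> colourings"
  unfolding relabel_def colourings_def by (auto simp: PiE_iff P_inv_apply_in)

lemma relabel_comp: "p \<in> P \<Longrightarrow> q \<in> P \<Longrightarrow> relabel p (relabel q t) = relabel (p \<circ> q) t"
  using o_inv_distrib[OF permutes_bij[OF P_permutes] permutes_bij[OF P_permutes], of p q]
  unfolding relabel_def by (auto simp: P_inv_apply_in intro!: restrict_ext)

lemma relabel_id: "t \<in> colourings \<Longrightarrow> relabel id t = t"
  unfolding relabel_def colourings_def by (auto simp: PiE_iff extensional_def fun_eq_iff)

lemma group_P_group: "group P_group"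
  unfolding P_group_def using subgroup.subgroup_is_group[OF P_subgroup sym_group_is_group] .

lemma relabel_action: "group_action P_group colourings relabel_action"
proof -
  have bij: "restrict (relabel q) colourings \<in> Bij colourings" if q: "q \<in> P" for q
  proof -
    have q': "inv' q \<in> P"
      using inv_in_P[OF q] .
    have inverse: "relabel (inv' q) (relabel q t) = t" "relabel q (relabel (inv' q) t) = t"
      if "t \<in> colourings" for t
      unfolding relabel_comp[OF q' q] relabel_comp[OF q q'] permutes_inv_o[OF P_permutes[OF q]]
      using relabel_id[OF that] by simp_all
    have "bij_betw (relabel q) colourings colourings"
      by (rule bij_betwI[of _ _ _ "relabel (inv' q)"]) (simp_all add: inverse relabel_mem q q')
    then show ?thesis
      unfolding Bij_def by simp
  qed
  have mult: "restrict (relabel (p \<circ> q)) colourings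
      = compose colourings (restrict (relabel p) colourings) (restrict (relabel q) colourings)"
    if "p \<in> P" "q \<in> P" for p q
    using that by (auto simp: compose_def relabel_mem relabel_comp intro!: restrict_ext)
  show ?thesis
    unfolding group_action_def group_hom_def group_hom_axioms_def
  proof (intro conjI group_P_group group_BijGroup)
    show "relabel_action \<in> hom P_group (BijGroup colourings)"
      unfolding hom_def using bij mult by (auto simp: P_group_def sym_group_mult BijGroup_def)
  qed
qed

lemma orbit_relabel:
  "t \<in> colourings \<Longrightarrow>
    orbit P_group relabel_action t = {relabel q t | q. q \<in> P}"
  unfolding orbit_def P_group_def by auto

lemma base_conj_iff:
  assumes f: "f \<in> base" and f': "f' \<in> base"
  shows "(f', id) \<in> conj_class G (f, id) \<longleftrightarrow> (\<exists>q\<in>P. colour f' = relabel q (colour f))"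
proof
  assume "(f', id) \<in> conj_class G (f, id)"
  then obtain g q where gq: "g \<in> base" "q \<in> P" "(f', id) = (g, q) \<otimes>\<^bsub>G\<^esub> (f, id) \<otimes>\<^bsub>G\<^esub> inv\<^bsub>G\<^esub> (g, q)"
    unfolding conj_class_def by (auto simp: wreath_carrier)
  then have "f' = (\<lambda>i\<in>I. g i \<otimes> f (inv' q i) \<otimes> inv (g i))"
    using wreath_conj_of_base[OF f] by simp
  then have "colour f' = relabel q (colour f)"
    using gq f unfolding colour_def relabel_def
    by (auto simp: PiE_iff P_inv_apply_in conj_class_of_conj intro!: restrict_ext)
  then show "\<exists>q\<in>P. colour f' = relabel q (colour f)"
    using gq by blast
next
  assume "\<exists>q\<in>P. colour f' = relabel q (colour f)"
  then obtain q where q: "q \<in> P" "colour f' = relabel q (colour f)"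
    by blast
  have "\<exists>a\<in>carrier A. f' i = a \<otimes> f (inv' q i) \<otimes> inv a" if i: "i \<in> I" for i
  proof -
    have "conj_class A (f' i) = conj_class A (f (inv' q i))"
      using fun_cong[OF q(2), of i] i q(1) unfolding colour_def relabel_def
      by (simp add: P_inv_apply_in)
    then have "f' i \<in> conj_class A (f (inv' q i))"
      using conj_class_self f f' i q(1) by (metis PiE_mem P_inv_apply_in)
    then show ?thesis
      unfolding conj_class_def by blast
  qed
  then obtain g where g: "\<forall>i\<in>I. g i \<in> carrier A \<and> f' i = g i \<otimes> f (inv' q i) \<otimes> inv (g i)"
    by metis
  have "(restrict g I, q) \<otimes>\<^bsub>G\<^esub> (f, id) \<otimes>\<^bsub>G\<^esub> inv\<^bsub>G\<^esub> (restrict g I, q) = (f', id)"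
    using wreath_conj_of_base[OF f _ q(1), of "restrict g I"] g f'
    by (auto simp: PiE_iff extensional_def fun_eq_iff)
  moreover have "(restrict g I, q) \<in> carrier G"
    using g q(1) by (simp add: wreath_carrier)
  ultimately show "(f', id) \<in> conj_class G (f, id)"
    unfolding conj_class_def by force
qed

lemma finite_base: "finite (carrier A) \<Longrightarrow> finite base"
  using finite_I by (simp add: finite_PiE)

lemma finite_colourings: "finite (carrier A) \<Longrightarrow> finite colourings"
  unfolding colourings_def using finite_I by (simp add: finite_PiE)

lemma card_base_classes:
  assumes "finite (carrier A)"
  shows "card ((\<lambda>f. conj_class G (f, id)) ` base) = num_colour_orbits"
proof -
  let ?class = "\<lambda>f. conj_class G (f, id)"
    and ?orbit = "\<lambda>f. orbit P_group relabel_action (colour f)"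
  have colour_mem: "colour f \<in> colourings" if "f \<in> base" for f
    using colour_image that by blast
  have same_kernel: "?class f1 = ?class f2 \<longleftrightarrow> ?orbit f1 = ?orbit f2"
    if f: "f1 \<in> base" "f2 \<in> base" for f1 f2
  proof -
    have "?class f1 = ?class f2 \<longleftrightarrow> (f2, id) \<in> ?class f1"
      using group.conj_class_eq_iff[OF wreath_group] f id_in_P by (simp add: wreath_carrier)
    also have "\<dots> \<longleftrightarrow> colour f2 \<in> orbit P_group relabel_action (colour f1)"
      using base_conj_iff[OF f] orbit_relabel[OF colour_mem[OF f(1)]] by auto
    also have "\<dots> \<longleftrightarrow> ?orbit f1 = ?orbit f2"
      using group_action.orbit_eq_iff[OF relabel_action colour_mem[OF f(1)] colour_mem[OF f(2)]] ..
    finally show ?thesis .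
  qed
  have "orbits P_group colourings relabel_action = ?orbit ` base"
    unfolding orbits_def colour_image[symmetric] by blast
  moreover have "card (?class ` base) = card (?orbit ` base)"
    using same_kernel finite_base[OF assms]
    by (intro antisym card_image_le_if_factors) auto
  ultimately show ?thesis
    by simp
qed

lemma card_fixed_colourings_le:
  assumes "finite (carrier A)" and q: "q \<in> P"
  shows "card (invariants colourings relabel_action q)
    \<le> card (conj_class A ` carrier A) ^ card (cycle_reps (inv' q) I)"
proof -
  have "invariants colourings relabel_action q
      \<subseteq> {t \<in> I \<rightarrow>\<^sub>E conj_class A ` carrier A. \<forall>i\<in>I. t (inv' q i) = t i}"
  proof (intro subsetI CollectI conjI ballI)
    fix t assume "t \<in> invariants colourings relabel_action q"
    then have t: "t \<in> colourings" "relabel q t = t"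
      unfolding invariants_def by auto
    then show "t \<in> I \<rightarrow>\<^sub>E conj_class A ` carrier A"
      unfolding colourings_def by blast
    fix i assume "i \<in> I"
    then show "t (inv' q i) = t i"
      using fun_cong[OF t(2), of i] unfolding relabel_def by simp
  qed
  moreover have "finite {t \<in> I \<rightarrow>\<^sub>E conj_class A ` carrier A. \<forall>i\<in>I. t (inv' q i) = t i}"
    using assms(1) finite_I by (simp add: finite_PiE)
  ultimately have "card (invariants colourings relabel_action q)
      \<le> card {t \<in> I \<rightarrow>\<^sub>E conj_class A ` carrier A. \<forall>i\<in>I. t (inv' q i) = t i}"
    by (simp add: card_mono)
  also have "\<dots> \<le> card (conj_class A ` carrier A) ^ card (cycle_reps (inv' q) I)"
    using card_invariant_functions_le[OF P_permutes[OF inv_in_P[OF q]] finite_I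
        finite_imageI[OF assms(1), of "conj_class A"]] .
  finally show ?thesis .
qed

end

section \<open>Conjugacy classes outside the base group\<close>

context wreath_product
begin

lemma conj_class_eq_by_base:
  assumes "f \<in> base" "g \<in> base" "\<sigma> \<in> P"
  shows "conj_class G (\<lambda>i\<in>I. g i \<otimes> f i \<otimes> inv (g (inv' \<sigma> i)), \<sigma>) = conj_class G (f, \<sigma>)"
proof -
  have "(\<lambda>i\<in>I. g i \<otimes> f i \<otimes> inv (g (inv' \<sigma> i)), \<sigma>) \<in> conj_class G (f, \<sigma>)"
    using group.conj_class_conj[OF wreath_group, of "(f, \<sigma>)" "(g, id)"] assms id_in_P
    by (simp add: wreath_carrier wreath_conj_by_base)
  then show ?thesis
    using group.conj_class_eq[OF wreath_group] assms by (simp add: wreath_carrier)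
qed

text \<open>Conjugating by the base element that is \<open>inv (f i)\<close> at \<open>i\<close> and trivial elsewhere
  clears the entry at \<open>i\<close> and changes no entry except the one at \<open>\<sigma> i\<close>.\<close>

lemma exists_conj_supported_on_cycle_reps_step:
  assumes \<sigma>: "\<sigma> \<in> P" and f: "f \<in> base"
    and i: "i \<in> I" "i \<notin> cycle_reps \<sigma> I" "f i \<noteq> \<one>"
  obtains f' where "f' \<in> base" "conj_class G (f', \<sigma>) = conj_class G (f, \<sigma>)"
    "{j \<in> I. f' j \<noteq> \<one>} \<subseteq> ({j \<in> I. f j \<noteq> \<one>} - {i}) \<union> {\<sigma> i}"
proof -
  have fi: "f i \<in> carrier A"
    using f i(1) by blast
  have "\<sigma> i \<noteq> i"
    using fixpoint_in_cycle_reps[OF P_permutes[OF \<sigma>] finite_I i(1)] i(2) by blast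
  then have inv_ne: "inv' \<sigma> i \<noteq> i"
    by (metis P_inverses(1)[OF \<sigma>])
  define g where "g = (\<lambda>j\<in>I. if j = i then inv (f i) else \<one>)"
  define f' where "f' = (\<lambda>j\<in>I. g j \<otimes> f j \<otimes> inv (g (inv' \<sigma> j)))"
  have g: "g \<in> base"
    using fi unfolding g_def by simp
  have "f' \<in> base"
    using f g \<sigma> unfolding f'_def by (auto simp: PiE_iff P_inv_apply_in)
  moreover have "conj_class G (f', \<sigma>) = conj_class G (f, \<sigma>)"
    unfolding f'_def using conj_class_eq_by_base[OF f g \<sigma>] .
  moreover have "{j \<in> I. f' j \<noteq> \<one>} \<subseteq> ({j \<in> I. f j \<noteq> \<one>} - {i}) \<union> {\<sigma> i}"
  proof -
    have "f' j = f j" if "j \<in> I" "j \<noteq> i" "j \<noteq> \<sigma> i" for j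
    proof -
      have "inv' \<sigma> j \<noteq> i"
        using that(3) P_inverses(1)[OF \<sigma>, of j] by metis
      then show ?thesis
        using that f \<sigma> unfolding f'_def g_def by (auto simp: PiE_iff P_inv_apply_in)
    qed
    moreover have "f' i = \<one>"
      using i(1) inv_ne fi \<sigma> unfolding f'_def g_def by (simp add: P_inv_apply_in)
    ultimately show ?thesis
      by force
  qed
  ultimately show ?thesis
    by (rule that)
qed

lemma exists_conj_supported_on_cycle_reps:
  assumes \<sigma>: "\<sigma> \<in> P" and f: "f \<in> base"
  obtains f' where "f' \<in> base" "\<forall>i\<in>I - cycle_reps \<sigma> I. f' i = \<one>"
    "conj_class G (f', \<sigma>) = conj_class G (f, \<sigma>)"
proof -
  let ?supp = "\<lambda>f. {j \<in> I. f j \<noteq> \<one>}" and ?d = "cycle_dist \<sigma>"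
  have "\<exists>f'\<in>base. (\<forall>i\<in>I - cycle_reps \<sigma> I. f' i = \<one>) \<and> conj_class G (f', \<sigma>) = conj_class G (f, \<sigma>)"
    using f
  proof (induction "\<Sum>j\<in>?supp f. ?d j" arbitrary: f rule: less_induct)
    case less
    show ?case
    proof (cases "\<forall>i\<in>I - cycle_reps \<sigma> I. f i = \<one>")
      case True
      then show ?thesis
        using less.prems by blast
    next
      case False
      then obtain i where i: "i \<in> I" "i \<notin> cycle_reps \<sigma> I" "f i \<noteq> \<one>"
        by blast
      obtain f1 where f1: "f1 \<in> base" "conj_class G (f1, \<sigma>) = conj_class G (f, \<sigma>)"
        and supp: "?supp f1 \<subseteq> (?supp f - {i}) \<union> {\<sigma> i}"
        using exists_conj_supported_on_cycle_reps_step[OF \<sigma> less.prems i] .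
      have fin: "finite (?supp f)"
        using finite_I by simp
      have "(\<Sum>j\<in>?supp f1. ?d j) \<le> (\<Sum>j\<in>(?supp f - {i}) \<union> {\<sigma> i}. ?d j)"
        using supp fin by (intro sum_mono2) auto
      also have "\<dots> \<le> (\<Sum>j\<in>?supp f - {i}. ?d j) + ?d (\<sigma> i)"
        using sum_Un_nat[of "?supp f - {i}" "{\<sigma> i}" ?d] fin by simp
      also have "\<dots> < (\<Sum>j\<in>?supp f - {i}. ?d j) + ?d i"
        using cycle_dist_step[OF P_permutes[OF \<sigma>] finite_I i(2,1)] by simp
      also have "\<dots> = (\<Sum>j\<in>?supp f. ?d j)"
        using sum.remove[OF fin, of i ?d] i by simp
      finally show ?thesis
        using less.hyps[OF _ f1(1)] f1(2) by metis
    qed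
  qed
  then show ?thesis
    using that by blast
qed

text \<open>A base element constant on each cycle of \<open>\<sigma>\<close> conjugates \<open>(f, \<sigma>)\<close> entrywise.\<close>

lemma conj_class_eq_if_cycle_rep_classes_eq:
  assumes \<sigma>: "\<sigma> \<in> P" and f: "f \<in> base" and f': "f' \<in> base"
    and trivial: "\<forall>i\<in>I - cycle_reps \<sigma> I. f i = \<one>" "\<forall>i\<in>I - cycle_reps \<sigma> I. f' i = \<one>"
    and classes: "\<forall>s\<in>cycle_reps \<sigma> I. conj_class A (f s) = conj_class A (f' s)"
  shows "conj_class G (f', \<sigma>) = conj_class G (f, \<sigma>)"
proof -
  let ?rep = "cycle_rep \<sigma>"
  have "\<exists>a\<in>carrier A. f' s = a \<otimes> f s \<otimes> inv a" if s: "s \<in> cycle_reps \<sigma> I" for s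
  proof -
    have "s \<in> I"
      using s unfolding cycle_reps_def by blast
    then have "f' s \<in> conj_class A (f s)"
      using classes s f f' conj_class_self by (metis PiE_mem)
    then show ?thesis
      unfolding conj_class_def by blast
  qed
  then obtain a where a: "\<forall>s\<in>cycle_reps \<sigma> I. a s \<in> carrier A \<and> f' s = a s \<otimes> f s \<otimes> inv (a s)"
    by metis
  define g where "g = (\<lambda>j\<in>I. a (?rep j))"
  have rep: "?rep j \<in> cycle_reps \<sigma> I" if "j \<in> I" for j
    using cycle_rep_in_reps[OF P_permutes[OF \<sigma>] finite_I that] .
  have g: "g \<in> base"
    using a rep unfolding g_def by simp
  have "f' j = g j \<otimes> f j \<otimes> inv (g (inv' \<sigma> j))" if j: "j \<in> I" for j
  proof -
    have "g (inv' \<sigma> j) = g j"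
      using j \<sigma> unfolding g_def
      by (simp add: P_inv_apply_in cycle_rep_inv[OF P_permutes[OF \<sigma>] finite_I])
    moreover have "f' j = a (?rep j) \<otimes> f j \<otimes> inv (a (?rep j))"
    proof (cases "j \<in> cycle_reps \<sigma> I")
      case True
      then show ?thesis
        using a unfolding cycle_reps_def by auto
    next
      case False
      then show ?thesis
        using trivial j a rep[OF j] by simp
    qed
    ultimately show ?thesis
      using j unfolding g_def by simp
  qed
  then have "f' = (\<lambda>j\<in>I. g j \<otimes> f j \<otimes> inv (g (inv' \<sigma> j)))"
    using f' by (auto simp: PiE_iff extensional_def fun_eq_iff)
  then show ?thesis
    using conj_class_eq_by_base[OF f g \<sigma>] by simp
qed

lemma card_coset_classes:
  assumes "finite (carrier A)" and \<sigma>: "\<sigma> \<in> P"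
  shows "card ((\<lambda>f. conj_class G (f, \<sigma>)) ` base)
    \<le> card (conj_class A ` carrier A) ^ card (cycle_reps \<sigma> I)"
proof -
  let ?S = "cycle_reps \<sigma> I" and ?class = "\<lambda>f. conj_class G (f, \<sigma>)"
  let ?N = "{f \<in> base. \<forall>i\<in>I - ?S. f i = \<one>}"
  let ?classes_on_S = "\<lambda>f. \<lambda>s\<in>?S. conj_class A (f s)"
  have S: "?S \<subseteq> I" "finite ?S"
    unfolding cycle_reps_def using finite_I by auto
  have "?class ` base \<subseteq> ?class ` ?N"
  proof
    fix c assume "c \<in> ?class ` base"
    then obtain f where f: "f \<in> base" "c = ?class f"
      by blast
    obtain f' where f': "f' \<in> base" "\<forall>i\<in>I - ?S. f' i = \<one>" "?class f' = ?class f"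
      using exists_conj_supported_on_cycle_reps[OF \<sigma> f(1)] .
    have "f' \<in> ?N"
      using f'(1,2) by blast
    then show "c \<in> ?class ` ?N"
      by (rule rev_image_eqI) (simp only: f(2) f'(3))
  qed
  moreover have "?class ` ?N \<subseteq> ?class ` base"
    by blast
  ultimately have "?class ` base = ?class ` ?N"
    by blast
  also have "card \<dots> \<le> card (?classes_on_S ` ?N)"
  proof (rule card_image_le_if_factors)
    show "finite (?classes_on_S ` ?N)"
      using finite_base[OF assms(1)] by simp
    fix f f' assume f: "f \<in> ?N" and f': "f' \<in> ?N" and eq: "?classes_on_S f = ?classes_on_S f'"
    have "\<forall>s\<in>?S. conj_class A (f' s) = conj_class A (f s)"
      using eq by (metis restrict_apply')
    with f f' show "?class f = ?class f'"
      by (intro conj_class_eq_if_cycle_rep_classes_eq[OF \<sigma>]) auto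
  qed
  also have "\<dots> \<le> card (?S \<rightarrow>\<^sub>E conj_class A ` carrier A)"
    using S assms(1) by (intro card_mono) (auto simp: finite_PiE PiE_iff subset_iff)
  also have "\<dots> = card (conj_class A ` carrier A) ^ card ?S"
    using card_PiE[OF S(2), of "\<lambda>_. conj_class A ` carrier A"] by simp
  finally show ?thesis
    by simp
qed

end

section \<open>Regular permutation groups\<close>

lemma regular_perm_group_card:
  assumes "regular_perm_group r P" and "r \<ge> 1"
  shows "card P = r"
proof -
  have P: "subgroup P (sym_group r)" and reg: "\<forall>i\<in>{1..r}. \<forall>j\<in>{1..r}. \<exists>!p. p \<in> P \<and> p i = j"
    using assms(1) unfolding regular_perm_group_def by blast+
  have one: "(1::nat) \<in> {1..r}"
    using assms(2) by simp
  have image: "p 1 \<in> {1..r}" if "p \<in> P" for p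
    using subgroup.subset[OF P] that one permutes_in_image by (fastforce simp: sym_group_carrier)
  have "p = q" if "p \<in> P" "q \<in> P" "p 1 = q 1" for p q
  proof -
    have "\<exists>!p'. p' \<in> P \<and> p' 1 = q 1"
      using reg one image[OF that(2)] by blast
    then show ?thesis
      using that by blast
  qed
  moreover have "\<exists>p\<in>P. j = p 1" if "j \<in> {1..r}" for j
    using reg one that by blast
  ultimately have "bij_betw (\<lambda>p. p 1) P {1..r}"
    using image by (intro bij_betwI') auto
  then show ?thesis
    by (simp add: bij_betw_same_card)
qed

lemma regular_perm_group_fixpoint_free:
  assumes "regular_perm_group r P" and "p \<in> P" "p \<noteq> id" "i \<in> {1..r}"
  shows "p i \<noteq> i"
proof
  assume "p i = i"
  have "id \<in> P"
    using assms(1) subgroup.one_closed unfolding regular_perm_group_def by (fastforce simp: sym_group_one)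
  moreover have "\<exists>!q. q \<in> P \<and> q i = i"
    using assms(1,4) unfolding regular_perm_group_def by blast
  ultimately show False
    using assms(2,3) \<open>p i = i\<close> by auto
qed

lemma power_le_powr_half:
  fixes x :: real
  assumes "1 \<le> x" and "2 * n \<le> m"
  shows "x ^ n \<le> x powr (real m / 2)"
proof -
  have "x ^ n = x powr real n"
    using assms(1) by (simp add: powr_realpow)
  also have "\<dots> \<le> x powr (real m / 2)"
    using assms by (intro powr_mono) auto
  finally show ?thesis .
qed

locale regular_wreath_product = wreath_product +
  assumes finite_A: "finite (carrier A)"
    and regular: "regular_perm_group r P"
    and r_pos: "r \<ge> 1"
begin

lemma card_P: "card P = r"
  using regular_perm_group_card[OF regular r_pos] .

lemma card_I: "card I = r"
  unfolding I_def by simp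

lemma num_conj_classes_pos: "num_conj_classes A \<ge> 1"
  using finite_A by (auto simp: num_conj_classes_eq_card Suc_le_eq card_gt_0_iff)

lemma power_cycle_reps_le:
  assumes "q \<in> P" "q \<noteq> id"
  shows "real (num_conj_classes A ^ card (cycle_reps q I))
    \<le> real (num_conj_classes A) powr (real r / 2)"
proof -
  have "2 * card (cycle_reps q I) \<le> r"
    using card_cycle_reps_le[OF P_permutes[OF assms(1)] finite_I]
      regular_perm_group_fixpoint_free[OF regular assms] card_I
    unfolding I_def by simp
  then show ?thesis
    using power_le_powr_half num_conj_classes_pos by simp
qed

lemma card_colourings: "card colourings = num_conj_classes A ^ r"
  unfolding colourings_def num_conj_classes_eq_card
  using card_PiE[OF finite_I, of "\<lambda>_. conj_class A ` carrier A"] card_I by simp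

lemma colour_orbits_bounds:
  shows "real (num_conj_classes A) ^ r \<le> real r * num_colour_orbits"
    and "real r * num_colour_orbits
      \<le> real (num_conj_classes A) ^ r + (real r - 1) * real (num_conj_classes A) powr (real r / 2)"
proof -
  let ?fixed = "\<lambda>q. card (invariants colourings relabel_action q)"
  have "num_colour_orbits * r = (\<Sum>q\<in>P. ?fixed q)"
    using group_action.burnside[OF relabel_action] finite_P finite_colourings[OF finite_A] card_P
    unfolding P_group_def order_def by simp
  also have "\<dots> = ?fixed id + (\<Sum>q\<in>P - {id}. ?fixed q)"
    using sum.remove[OF finite_P id_in_P] .
  also have "?fixed id = num_conj_classes A ^ r"
    using relabel_id card_colourings unfolding invariants_def by simp
  finally have "num_colour_orbits * r = num_conj_classes A ^ r + (\<Sum>q\<in>P - {id}. ?fixed q)" .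
  then have "real (num_colour_orbits * r) = real (num_conj_classes A ^ r + (\<Sum>q\<in>P - {id}. ?fixed q))"
    by (rule arg_cong)
  then have burnside: "real r * num_colour_orbits
      = real (num_conj_classes A) ^ r + (\<Sum>q\<in>P - {id}. real (?fixed q))"
    by (simp add: mult.commute)
  then show "real (num_conj_classes A) ^ r \<le> real r * num_colour_orbits"
    by (simp add: sum_nonneg)
  have "real (?fixed q) \<le> real (num_conj_classes A) powr (real r / 2)" if q: "q \<in> P - {id}" for q
  proof -
    have "inv' q \<noteq> id"
    proof
      assume "inv' q = id"
      then have "q = id"
        using permutes_inv_inv[OF P_permutes, of q] q by (metis DiffD1 inv_id)
      then show False
        using q by blast
    qed
    then have inv_q: "inv' q \<in> P" "inv' q \<noteq> id"
      using q inv_in_P by auto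
    have "?fixed q \<le> num_conj_classes A ^ card (cycle_reps (inv' q) I)"
      using card_fixed_colourings_le[OF finite_A] q unfolding num_conj_classes_eq_card by blast
    then show ?thesis
      by (rule order_trans[OF of_nat_mono power_cycle_reps_le[OF inv_q]])
  qed
  then have "(\<Sum>q\<in>P - {id}. real (?fixed q))
      \<le> (\<Sum>q\<in>P - {id}. real (num_conj_classes A) powr (real r / 2))"
    by (rule sum_mono)
  also have "\<dots> = (real r - 1) * real (num_conj_classes A) powr (real r / 2)"
    using card_P finite_P id_in_P r_pos by (simp add: of_nat_diff)
  finally show "real r * num_colour_orbits
      \<le> real (num_conj_classes A) ^ r + (real r - 1) * real (num_conj_classes A) powr (real r / 2)"
    using burnside by simp
qed

lemma num_conj_classes_wreath_bounds:
  shows "num_colour_orbits \<le> num_conj_classes G"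
    and "real (num_conj_classes G)
      \<le> num_colour_orbits + (real r - 1) * real (num_conj_classes A) powr (real r / 2)"
proof -
  let ?coset_classes = "\<lambda>\<sigma>. (\<lambda>f. conj_class G (f, \<sigma>)) ` base"
  have carrier: "carrier G = (\<Union>\<sigma>\<in>P. (\<lambda>f. (f, \<sigma>)) ` base)"
    by (auto simp: wreath_carrier)
  then have classes: "conj_class G ` carrier G = (\<Union>\<sigma>\<in>P. ?coset_classes \<sigma>)"
    by auto
  have finite: "finite (conj_class G ` carrier G)"
    unfolding carrier using finite_P finite_base[OF finite_A] by simp
  have "num_colour_orbits = card (?coset_classes id)"
    using card_base_classes[OF finite_A] ..
  also have "\<dots> \<le> num_conj_classes G"
    unfolding num_conj_classes_eq_card classes using finite id_in_P
    by (intro card_mono) (auto simp: classes)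
  finally show "num_colour_orbits \<le> num_conj_classes G" .
  have "conj_class G ` carrier G = ?coset_classes id \<union> (\<Union>\<sigma>\<in>P - {id}. ?coset_classes \<sigma>)"
    unfolding classes using id_in_P by blast
  then have "num_conj_classes G \<le> card (?coset_classes id) + card (\<Union>\<sigma>\<in>P - {id}. ?coset_classes \<sigma>)"
    unfolding num_conj_classes_eq_card by (simp only: card_Un_le)
  moreover have "card (\<Union>\<sigma>\<in>P - {id}. ?coset_classes \<sigma>) \<le> (\<Sum>\<sigma>\<in>P - {id}. card (?coset_classes \<sigma>))"
    using finite_P by (intro card_UN_le) simp
  moreover have "\<dots> \<le> (\<Sum>\<sigma>\<in>P - {id}. num_conj_classes A ^ card (cycle_reps \<sigma> I))"
    using card_coset_classes[OF finite_A] unfolding num_conj_classes_eq_card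
    by (intro sum_mono) blast
  moreover have "card (?coset_classes id) = num_colour_orbits"
    using card_base_classes[OF finite_A] .
  ultimately have "num_conj_classes G \<le> num_colour_orbits + (\<Sum>\<sigma>\<in>P - {id}. num_conj_classes A ^ card (cycle_reps \<sigma> I))"
    by linarith
  then have "real (num_conj_classes G)
      \<le> real (num_colour_orbits + (\<Sum>\<sigma>\<in>P - {id}. num_conj_classes A ^ card (cycle_reps \<sigma> I)))"
    by (rule of_nat_mono)
  also have "\<dots> = num_colour_orbits + (\<Sum>\<sigma>\<in>P - {id}. real (num_conj_classes A ^ card (cycle_reps \<sigma> I)))"
    by simp
  also have "\<dots> \<le> num_colour_orbits + (\<Sum>\<sigma>\<in>P - {id}. real (num_conj_classes A) powr (real r / 2))"
    using power_cycle_reps_le by (intro add_left_mono sum_mono) blast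
  also have "\<dots> = num_colour_orbits + (real r - 1) * real (num_conj_classes A) powr (real r / 2)"
    using card_P finite_P id_in_P r_pos by (simp add: of_nat_diff)
  finally show "real (num_conj_classes G)
      \<le> num_colour_orbits + (real r - 1) * real (num_conj_classes A) powr (real r / 2)" .
qed

lemma num_conj_classes_wreath_estimate:
  "\<bar>real (num_conj_classes G) - real (num_conj_classes A) ^ r / real r\<bar>
    \<le> real r * real (num_conj_classes A) powr (real r / 2)"
proof -
  let ?n = "real num_colour_orbits" and ?K = "real (num_conj_classes A) ^ r"
    and ?X = "real (num_conj_classes A) powr (real r / 2)"
  have r: "real r \<ge> 1"
    using r_pos by simp
  have lower: "?K / real r \<le> ?n"
    using colour_orbits_bounds(1) r by (simp add: divide_le_eq mult.commute)
  have "(real r - 1) * ?X \<le> real r * ?X"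
    by (simp add: algebra_simps)
  then have "real r * ?n \<le> ?K + real r * ?X"
    using colour_orbits_bounds(2) by linarith
  then have upper: "?n \<le> ?K / real r + ?X"
    using r by (simp add: field_simps mult.commute)
  show ?thesis
    using lower upper num_conj_classes_wreath_bounds by (simp add: abs_le_iff algebra_simps)
qed

end

theorem lemma4p4:
  "\<exists>C::real. \<forall>(A::('a, 'b) monoid_scheme) (r::nat) (P::(nat \<Rightarrow> nat) set).
     group A \<longrightarrow> finite (carrier A) \<longrightarrow> carrier A \<noteq> {\<one>\<^bsub>A\<^esub>} \<longrightarrow>
     r \<ge> 1 \<longrightarrow> regular_perm_group r P \<longrightarrow>
     \<bar>real (num_conj_classes (wreath A r P))
        - real (num_conj_classes A) ^ r / real r\<bar>
       \<le> C * real r * real (num_conj_classes A) powr (real r / 2)"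
proof (intro exI[of _ 1] allI impI)
  fix A :: "('a, 'b) monoid_scheme" and r P
  assume "group A" "finite (carrier A)" "r \<ge> 1" "regular_perm_group r P"
  then interpret regular_wreath_product A r P
    by (intro regular_wreath_product.intro wreath_product.intro regular_wreath_product_axioms.intro
        wreath_product_axioms.intro) (auto simp: regular_perm_group_def)
  show "\<bar>real (num_conj_classes (wreath A r P)) - real (num_conj_classes A) ^ r / real r\<bar>
      \<le> 1 * real r * real (num_conj_classes A) powr (real r / 2)"
    using num_conj_classes_wreath_estimate by simp
qed

end
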